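(* Let $H\in\mathbb{R}^{n\times n}$ and $M\in\mathbb{R}^{m\times m}$ be symmetric positive semidefinite and $A\in\mathbb{R}^{m\times n}$. Let $l$ be an index and $\mathcal{B},\mathcal{N}$ index sets such that $\mathcal{B}$, $\{l\}$, $\mathcal{N}$ are pairwise disjoint with union $\{1,\dots,n\}$. Consider vectors $(\Delta x,\Delta y,\Delta z)\in\mathbb{R}^n\times\mathbb{R}^m\times\mathbb{R}^n$ satisfying \[ H\Delta x-A^T\Delta y-\Delta z=0,\quad A\Delta x+M\Delta y=0,\quad \Delta x_{\mathcal{N}}=0,\quad \Delta z_{\mathcal{B}}=0. \tag{$*$} \] Assume $K_{\mathcal{B}}$ is nonsingular and let $\Delta x_l$ be a given nonnegative scalar. 1. If $\Delta x_l=0$, then the only solution of $( * )$ with this value of $\Delta x_l$ is zero, i.e., $\Delta x_{\mathcal{B}}=0$, $\Delta y=0$, $\Delta z_l=0$, $\Delta z_{\mathcal{N}}=0$. 2. If $\Delta x_l>0$, then the quantities $\Delta x_{\mathcal{B}},\Delta y,\Delta z_l,\Delta z_{\mathcal{N}}$ of a solution of $( * )$ with this value of $\Delta x_l$ are unique and satisfy \[ K_{\mathcal{B}}\begin{pmatrix}\Delta x_{\mathcal{B}}\\ -\Delta y\end{pmatrix}=-\begin{pmatrix}h_{\mathcal{B}l}\\ a_l\end{pmatrix}\Delta x_l,\quad \Delta z_l=h_{ll}\Delta x_l+h_{\mathcal{B}l}^T\Delta x_{\mathcal{B}}-a_l^T\Delta y,\quad \Delta z_{\mathcal{N}}=h_{\mathcal{N}l}\Delta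 x_l+H_{\mathcal{B}\mathcal{N}}^T\Delta x_{\mathcal{B}}-A_{\mathcal{N}}^T\Delta y. \] Moreover, either (i) $K_l$ is nonsingular and $\Delta z_l>0$, or (ii) $K_l$ is singular and $\Delta z_l=0$, in which case $\Delta y=0$, $\Delta z_{\mathcal{N}}=0$, and the zero eigenvalue of $K_l$ has multiplicity one with corresponding eigenvector $(\Delta x_l,\Delta x_{\mathcal{B}},0)$.
   Context: For index sets $S,T$: $w_S$ is the subvector of $w$ indexed by $S$; $H_{ST}$ is the submatrix of $H$ with rows in $S$ and columns in $T$; $A_S$ is the matrix of columns of $A$ indexed by $S$; $a_l$ is the $l$th column of $A$; $h_{ll}$ is the $l$th diagonal entry of $H$; $h_{Sl}$ is the column vector of entries $h_{il}$, $i\in S$. Define \[ K_{\mathcal{B}}=\begin{pmatrix}H_{\mathcal{B}\mathcal{B}}&A_{\mathcal{B}}^T\\ A_{\mathcal{B}}&-M\end{pmatrix},\qquad K_l=\begin{pmatrix}h_{ll}&h_{\mathcal{B}l}^T&a_l^T\\ h_{\mathcal{B}l}&H_{\mathcal{B}\mathcal{B}}&A_{\mathcal{B}}^T\\ a_l&A_{\mathcal{B}}&-M\end{pmatrix}. \] *)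

theory Defs
  imports "Jordan_Normal_Form.DL_Submatrix" "Jordan_Normal_Form.Char_Poly"
begin

(* Index sets are 0-based subsets of {0..<n}; submatrices / subvectors list the
   selected indices in increasing order (via JNF's pick), as in the library's submatrix. *)

definition subvec :: "'a vec \<Rightarrow> nat set \<Rightarrow> 'a vec" where
  "subvec v S = vec (card {i. i < dim_vec v \<and> i \<in> S}) (\<lambda>i. v $ pick S i)"

definition cols_sub :: "'a mat \<Rightarrow> nat set \<Rightarrow> 'a mat" where
  "cols_sub A S = submatrix A UNIV S"

definition psd :: "real mat \<Rightarrow> bool" where
  "psd X \<longleftrightarrow> X \<in> carrier_mat (dim_row X) (dim_row X) \<and>
     (\<forall>v \<in> carrier_vec (dim_row X). v \<bullet> (X *\<^sub>v v) \<ge> 0)"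

definition KB :: "real mat \<Rightarrow> real mat \<Rightarrow> real mat \<Rightarrow> nat set \<Rightarrow> real mat" where
  "KB H A M B = four_block_mat (submatrix H B B) (transpose_mat (cols_sub A B))
                               (cols_sub A B) (- M)"

definition KB_col :: "real mat \<Rightarrow> real mat \<Rightarrow> nat set \<Rightarrow> nat \<Rightarrow> real vec" where
  "KB_col H A B l = subvec (col H l) B @\<^sub>v col A l"

(* K_l = [[h_ll, h_Bl^T, a_l^T], [h_Bl, H_BB, A_B^T], [a_l, A_B, -M]] *)
definition Kl :: "real mat \<Rightarrow> real mat \<Rightarrow> real mat \<Rightarrow> nat set \<Rightarrow> nat \<Rightarrow> real mat" where
  "Kl H A M B l = (let c = KB_col H A B l; k = dim_vec c in
     four_block_mat (mat 1 1 (\<lambda>_. H $$ (l, l))) (mat_of_rows k [c])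
                    (mat_of_cols k [c]) (KB H A M B))"

definition sys :: "real mat \<Rightarrow> real mat \<Rightarrow> real mat \<Rightarrow> nat set \<Rightarrow> nat set
                   \<Rightarrow> real vec \<Rightarrow> real vec \<Rightarrow> real vec \<Rightarrow> bool" where
  "sys H A M B N dx dy dz \<longleftrightarrow>
     dx \<in> carrier_vec (dim_col H) \<and> dy \<in> carrier_vec (dim_row M) \<and> dz \<in> carrier_vec (dim_col H) \<and>
     H *\<^sub>v dx - transpose_mat A *\<^sub>v dy - dz = 0\<^sub>v (dim_col H) \<and>
     A *\<^sub>v dx + M *\<^sub>v dy = 0\<^sub>v (dim_row M) \<and>
     (\<forall>i\<in>N. dx $ i = 0) \<and> (\<forall>i\<in>B. dz $ i = 0)"

end

theory Submission
  imports Defs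
begin

text \<open>
  With \<open>z = (dx\<^sub>B, -dy)\<close> the system reduces to \<open>K\<^sub>B z = - dx\<^sub>l (h\<^sub>B\<^sub>l, a\<^sub>l)\<close>, so a nonsingular
  \<open>K\<^sub>B\<close> determines the solution from \<open>dx\<^sub>l\<close>, and \<open>dz\<^sub>l = h\<^sub>l\<^sub>l dx\<^sub>l + (h\<^sub>B\<^sub>l, a\<^sub>l) \<bullet> z\<close> is
  \<open>dx\<^sub>l\<close> times the Schur complement of \<open>K\<^sub>B\<close> in \<open>K\<^sub>l\<close>. Pairing the system with \<open>dx\<close> gives
  \<open>dx\<^sub>l dz\<^sub>l = dx\<^sup>T H dx + dy\<^sup>T M dy \<ge> 0\<close>. If \<open>dz\<^sub>l > 0\<close>, \<open>K\<^sub>l\<close> is nonsingular. If \<open>dz\<^sub>l = 0\<close>,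
  both quadratic forms vanish, hence \<open>H dx = 0\<close> and \<open>M dy = 0\<close>; then \<open>(dx, 0, 0)\<close> is a
  solution, and uniqueness forces \<open>dy = 0\<close>, \<open>dz = 0\<close>. Now \<open>(dx\<^sub>l, z)\<close> spans the kernel of
  \<open>K\<^sub>l\<close>, and the zero eigenvalue is simple since \<open>K\<^sub>l\<close> is similar to a block triangular matrix
  with corner \<open>0\<close> and nonsingular block \<open>K\<^sub>B - w c\<^sup>T\<close>, where \<open>K\<^sub>B w = - c\<close>.
\<close>

section \<open>Subvectors and submatrices\<close>

lemma dim_subvec [simp]: "dim_vec (subvec v S) = card {i. i < dim_vec v \<and> i \<in> S}"
  unfolding subvec_def by simp

lemma index_subvec [simp]: "i < card {j. j < dim_vec v \<and> j \<in> S} \<Longrightarrow> subvec v S $ i = v $ pick S i"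
  unfolding subvec_def by simp

lemma pick_in_set_lt: "i < card {j. j < n \<and> j \<in> S} \<Longrightarrow> pick S i \<in> S \<and> pick S i < n"
  using pick_le pick_reduce_set pick_in_set_le by (metis (no_types, lifting) mem_Collect_eq)

lemma bij_betw_pick:
  assumes "finite S"
  shows "bij_betw (pick S) {..<card S} S"
proof (rule bij_betw_imageI)
  show "inj_on (pick S) {..<card S}"
    using pick_mono_le by (intro strict_mono_on_imp_inj_on) (auto simp: strict_mono_on_def)
  have "i \<in> pick S ` {..<card S}" if "i \<in> S" for i
  proof
    have "{a \<in> S. a < i} \<subset> S" using that by auto
    then show "card {a \<in> S. a < i} \<in> {..<card S}" using assms psubset_card_mono by auto
  qed (use pick_card_in_set[OF that] in simp)
  then show "pick S ` {..<card S} = S" using pick_in_set_le by auto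
qed

lemma sum_pick:
  "(\<Sum>q < card {j. j < n \<and> j \<in> S}. f (pick S q)) = (\<Sum>j | j < n \<and> j \<in> S. f j)"
proof -
  let ?S = "{j. j < n \<and> j \<in> S}"
  have "(\<Sum>q < card ?S. f (pick S q)) = (\<Sum>q < card ?S. f (pick ?S q))"
    using pick_reduce_set by (intro sum.cong) auto
  also have "\<dots> = sum f ?S"
    by (rule sum.reindex_bij_betw[OF bij_betw_pick]) simp
  finally show ?thesis .
qed

lemma scalar_prod_subvec:
  assumes "dim_vec u = dim_vec v" and "\<And>i. i < dim_vec v \<Longrightarrow> i \<notin> S \<Longrightarrow> v $ i = 0"
  shows "subvec u S \<bullet> subvec v S = u \<bullet> v"
proof -
  have "subvec u S \<bullet> subvec v S = (\<Sum>q < card {i. i < dim_vec v \<and> i \<in> S}. u $ pick S q * v $ pick S q)"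
    using assms(1) pick_in_set_lt by (auto simp: scalar_prod_def lessThan_atLeast0 intro!: sum.cong)
  also have "\<dots> = (\<Sum>i | i < dim_vec v \<and> i \<in> S. u $ i * v $ i)"
    by (rule sum_pick)
  also have "\<dots> = u \<bullet> v"
    unfolding scalar_prod_def using assms(2) by (intro sum.mono_neutral_left) auto
  finally show ?thesis .
qed

lemma row_submatrix:
  assumes "p < card {i. i < dim_row X \<and> i \<in> I}"
  shows "row (submatrix X I J) p = subvec (row X (pick I p)) J"
  using assms by (intro eq_vecI) (auto simp: dim_submatrix submatrix_index pick_le)

lemma submatrix_mult_subvec:
  assumes "dim_col X = dim_vec v" and "\<And>j. j < dim_vec v \<Longrightarrow> j \<notin> J \<Longrightarrow> v $ j = 0"
  shows "submatrix X I J *\<^sub>v subvec v J = subvec (X *\<^sub>v v) I"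
proof (rule eq_vecI)
  fix p assume "p < dim_vec (subvec (X *\<^sub>v v) I)"
  then have p: "p < card {i. i < dim_row X \<and> i \<in> I}" by simp
  then have "(submatrix X I J *\<^sub>v subvec v J) $ p = subvec (row X (pick I p)) J \<bullet> subvec v J"
    by (simp add: dim_submatrix row_submatrix)
  also have "\<dots> = row X (pick I p) \<bullet> v"
    using assms by (intro scalar_prod_subvec) auto
  finally show "(submatrix X I J *\<^sub>v subvec v J) $ p = subvec (X *\<^sub>v v) I $ p"
    using p pick_in_set_lt by simp
qed (simp add: dim_submatrix)

lemma transpose_submatrix: "(submatrix X I J)\<^sup>T = submatrix X\<^sup>T J I"
  by (intro eq_matI) (auto simp: dim_submatrix submatrix_index pick_le)

lemma subvec_UNIV [simp]: "subvec v UNIV = v"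
  by (intro eq_vecI) (auto simp: pick_UNIV)

lemma subvec_zero_vec [simp]: "subvec (0\<^sub>v n) S = 0\<^sub>v (card {i. i < n \<and> i \<in> S})"
  using pick_le by (intro eq_vecI) auto

lemma eq_if_subvec_eq:
  assumes dim: "dim_vec u = dim_vec v" and sub: "subvec u S = subvec v S"
    and outside: "\<And>i. i < dim_vec v \<Longrightarrow> i \<notin> S \<Longrightarrow> u $ i = v $ i"
  shows "u = v"
proof (rule eq_vecI)
  fix i assume i: "i < dim_vec v"
  show "u $ i = v $ i"
  proof (cases "i \<in> S")
    case True
    let ?q = "card {a \<in> S. a < i}"
    have "{a \<in> S. a < i} \<subset> {j. j < dim_vec v \<and> j \<in> S}" using i True by auto
    then have q: "?q < card {j. j < dim_vec v \<and> j \<in> S}" by (intro psubset_card_mono) auto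
    have "u $ i = subvec u S $ ?q" using q dim pick_card_in_set[OF True] by simp
    also have "\<dots> = v $ i" using q pick_card_in_set[OF True] by (simp add: sub)
    finally show ?thesis .
  qed (use outside i in auto)
qed (rule dim)

lemma add_vec_eq_0_iff:
  "u \<in> carrier_vec n \<Longrightarrow> v \<in> carrier_vec n \<Longrightarrow> u + v = 0\<^sub>v n \<longleftrightarrow> u = - (v :: 'a :: ab_group_add vec)"
  by (auto simp: vec_eq_iff add_eq_0_iff2)

lemma minus_vec_eq_0_iff:
  "u \<in> carrier_vec n \<Longrightarrow> v \<in> carrier_vec n \<Longrightarrow> u - v = 0\<^sub>v n \<longleftrightarrow> u = (v :: 'a :: ab_group_add vec)"
  by (auto simp: vec_eq_iff)

definition restrict_vec :: "'a :: zero vec \<Rightarrow> nat set \<Rightarrow> 'a vec" where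
  "restrict_vec v S = vec (dim_vec v) (\<lambda>i. if i \<in> S then v $ i else 0)"

lemma dim_restrict_vec [simp]: "dim_vec (restrict_vec v S) = dim_vec v"
  and index_restrict_vec [simp]: "i < dim_vec v \<Longrightarrow> restrict_vec v S $ i = (if i \<in> S then v $ i else 0)"
  unfolding restrict_vec_def by simp_all

lemma subvec_restrict_vec [simp]: "subvec (restrict_vec v S) S = subvec v S"
  using pick_in_set_lt by (intro eq_vecI) auto

lemma mult_unit_vec: "(X :: 'a :: semiring_1 mat) \<in> carrier_mat r c \<Longrightarrow> j < c \<Longrightarrow> X *\<^sub>v unit_vec c j = col X j"
  by (intro eq_vecI) auto

lemma scalar_prod_single_support:
  assumes "u \<in> carrier_vec n" "v \<in> carrier_vec n" "l < n"
    and "\<And>i. i < n \<Longrightarrow> i \<noteq> l \<Longrightarrow> u $ i * v $ i = 0"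
  shows "u \<bullet> v = u $ l * v $ l"
proof -
  have "u \<bullet> v = u $ l * v $ l + (\<Sum>i \<in> {0..<n} - {l}. u $ i * v $ i)"
    unfolding scalar_prod_def using assms(2,3) by (simp add: sum.remove)
  also have "(\<Sum>i \<in> {0..<n} - {l}. u $ i * v $ i) = 0" using assms(4) by (intro sum.neutral) auto
  finally show ?thesis by simp
qed

section \<open>Invertibility and semidefiniteness\<close>

lemma invertible_mat_iff_trivial_kernel:
  fixes X :: "'a :: field mat"
  assumes X: "X \<in> carrier_mat n n"
  shows "invertible_mat X \<longleftrightarrow> (\<forall>v \<in> carrier_vec n. X *\<^sub>v v = 0\<^sub>v n \<longrightarrow> v = 0\<^sub>v n)"
proof
  assume "invertible_mat X"
  then obtain Y where XY: "X * Y = 1\<^sub>m n" and YX: "Y * X = 1\<^sub>m (dim_row Y)"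
    unfolding invertible_mat_def inverts_mat_def using X by auto
  then have Y: "Y \<in> carrier_mat n n"
    using X by (metis carrier_matD carrier_matI index_mult_mat(2,3) index_one_mat(2,3))
  show "\<forall>v \<in> carrier_vec n. X *\<^sub>v v = 0\<^sub>v n \<longrightarrow> v = 0\<^sub>v n"
  proof (intro ballI impI)
    fix v assume v: "v \<in> carrier_vec n" and "X *\<^sub>v v = 0\<^sub>v n"
    then have "Y *\<^sub>v (X *\<^sub>v v) = 0\<^sub>v n" using Y by auto
    then show "v = 0\<^sub>v n" using YX Y v by (simp add: assoc_mult_mat_vec[symmetric, OF Y X v])
  qed
next
  assume "\<forall>v \<in> carrier_vec n. X *\<^sub>v v = 0\<^sub>v n \<longrightarrow> v = 0\<^sub>v n"
  then have "det X \<noteq> 0" using det_0_iff_vec_prod_zero_field[OF X] by auto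
  from det_non_zero_imp_unit[OF X this, of "()"]
  obtain Y where "Y \<in> carrier_mat n n" "X * Y = 1\<^sub>m n" "Y * X = 1\<^sub>m n"
    unfolding Units_def ring_mat_def by auto
  then show "invertible_mat X"
    using X unfolding invertible_mat_def inverts_mat_def by auto
qed

lemma invertible_mat_mult_vec_cancel:
  fixes X :: "'a :: field mat"
  assumes eq: "X *\<^sub>v u = X *\<^sub>v v"
    and X: "X \<in> carrier_mat n n" "invertible_mat X" and u: "u \<in> carrier_vec n" and v: "v \<in> carrier_vec n"
  shows "u = v"
proof -
  have "X *\<^sub>v (u - v) = X *\<^sub>v u - X *\<^sub>v v" by (rule mult_minus_distrib_mat_vec[OF X(1) u v])
  also have "\<dots> = 0\<^sub>v n" unfolding eq using X(1) v by (intro eq_vecI) auto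
  finally have "u - v = 0\<^sub>v n"
    using invertible_mat_iff_trivial_kernel[OF X(1)] X(2) u v by simp
  show ?thesis
  proof (rule eq_vecI)
    fix i assume "i < dim_vec v"
    with arg_cong[OF \<open>u - v = 0\<^sub>v n\<close>, of "\<lambda>x. x $ i"] show "u $ i = v $ i" using u v by simp
  qed (use u v in simp)
qed

lemma nonneg_quadratic_imp_linear_coeff_eq_0:
  fixes p q :: real
  assumes nonneg: "\<And>s. 0 \<le> p * s + q * s\<^sup>2"
  shows "p = 0"
proof (rule ccontr)
  assume "p \<noteq> 0"
  define r where "r = \<bar>q\<bar> + 1"
  define s where "s = - p / r"
  have r: "r > 0" unfolding r_def by simp
  have "p * s + q * s\<^sup>2 \<le> p * s + (r - 1) * s\<^sup>2" unfolding r_def by (simp add: mult_right_mono)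
  also have "\<dots> = - p\<^sup>2 / r\<^sup>2"
    unfolding s_def using r by (simp add: field_simps power2_eq_square)
  also have "\<dots> < 0" using \<open>p \<noteq> 0\<close> r by simp
  finally show False using nonneg[of s] by simp
qed

lemma psd_quadratic_form_eq_0:
  fixes X :: "real mat"
  assumes X: "X \<in> carrier_mat n n" "X\<^sup>T = X" "psd X" and v: "v \<in> carrier_vec n"
    and zero: "v \<bullet> (X *\<^sub>v v) = 0"
  shows "X *\<^sub>v v = 0\<^sub>v n"
proof -
  define u where "u = X *\<^sub>v v"
  have u: "u \<in> carrier_vec n" and Xu: "X *\<^sub>v u \<in> carrier_vec n" using X v unfolding u_def by auto
  have vXu: "v \<bullet> (X *\<^sub>v u) = u \<bullet> u"
    using transpose_vec_mult_scalar[OF X(1) u v] X(2) unfolding u_def by simp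
  have vu: "v \<bullet> u = 0" using zero unfolding u_def .
  have "0 \<le> (2 * (u \<bullet> u)) * s + (u \<bullet> (X *\<^sub>v u)) * s\<^sup>2" for s
  proof -
    have sv: "s \<cdot>\<^sub>v u \<in> carrier_vec n" using u by simp
    have "X *\<^sub>v (v + s \<cdot>\<^sub>v u) = u + s \<cdot>\<^sub>v (X *\<^sub>v u)"
      using X(1) v u unfolding u_def by (simp add: mult_add_distrib_mat_vec mult_mat_vec)
    then have "(v + s \<cdot>\<^sub>v u) \<bullet> (X *\<^sub>v (v + s \<cdot>\<^sub>v u)) = (2 * (u \<bullet> u)) * s + (u \<bullet> (X *\<^sub>v u)) * s\<^sup>2"
      using u v Xu vu vXu
      by (simp add: add_scalar_prod_distrib[OF v sv] scalar_prod_add_distrib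
          power2_eq_square algebra_simps)
    moreover have "v + s \<cdot>\<^sub>v u \<in> carrier_vec n" using u v by simp
    ultimately show ?thesis using X(3) X(1) unfolding psd_def by (metis carrier_matD(1))
  qed
  then have "2 * (u \<bullet> u) = 0" by (rule nonneg_quadratic_imp_linear_coeff_eq_0)
  then have "u \<bullet>c u = 0" by (simp add: conjugate_vec_def conjugate_real_def)
  then have "u = 0\<^sub>v n" using conjugate_square_eq_0_vec[OF u] by blast
  then show ?thesis unfolding u_def .
qed

section \<open>Bordered matrices\<close>

definition bordered_mat :: "'a :: comm_ring_1 \<Rightarrow> 'a vec \<Rightarrow> 'a mat \<Rightarrow> 'a mat" where
  "bordered_mat a c K = four_block_mat (mat 1 1 (\<lambda>_. a)) (mat_of_rows (dim_vec c) [c])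
     (mat_of_cols (dim_vec c) [c]) K"

lemma bordered_mat_carrier:
  assumes "K \<in> carrier_mat k k" and "c \<in> carrier_vec k"
  shows "bordered_mat a c K \<in> carrier_mat (1 + k) (1 + k)"
  using assms unfolding bordered_mat_def by (intro four_block_carrier_mat) auto

lemma bordered_mat_mult_vec:
  assumes K: "K \<in> carrier_mat k k" and c: "c \<in> carrier_vec k" and u: "u \<in> carrier_vec k"
  shows "bordered_mat a c K *\<^sub>v (vec 1 (\<lambda>_. s) @\<^sub>v u)
       = vec 1 (\<lambda>_. a * s + c \<bullet> u) @\<^sub>v (s \<cdot>\<^sub>v c + K *\<^sub>v u)"
proof -
  have R: "mat_of_rows k [c] \<in> carrier_mat 1 k" and C: "mat_of_cols k [c] \<in> carrier_mat k 1" by auto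
  have "bordered_mat a c K *\<^sub>v (vec 1 (\<lambda>_. s) @\<^sub>v u) =
      (mat 1 1 (\<lambda>_. a) *\<^sub>v vec 1 (\<lambda>_. s) + mat_of_rows k [c] *\<^sub>v u) @\<^sub>v
      (mat_of_cols k [c] *\<^sub>v vec 1 (\<lambda>_. s) + K *\<^sub>v u)"
    unfolding bordered_mat_def carrier_vecD[OF c] by (rule four_block_mat_mult_vec[OF _ R C K _ u]) auto
  also have "mat 1 1 (\<lambda>_. a) *\<^sub>v vec 1 (\<lambda>_. s) + mat_of_rows k [c] *\<^sub>v u = vec 1 (\<lambda>_. a * s + c \<bullet> u)"
    using c u by (intro eq_vecI) (auto simp: mat_of_rows_def row_def scalar_prod_def)
  also have "mat_of_cols k [c] *\<^sub>v vec 1 (\<lambda>_. s) + K *\<^sub>v u = s \<cdot>\<^sub>v c + K *\<^sub>v u"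
    using c u K by (intro eq_vecI) (auto simp: mat_of_cols_def row_def scalar_prod_def)
  finally show ?thesis .
qed

text \<open>If \<open>K z = - t c\<close>, the bordered matrix maps \<open>(t, z)\<close> to \<open>(a t + c \<bullet> z, 0)\<close>:
  the Schur complement \<open>a t + c \<bullet> z\<close> decides invertibility.\<close>

lemma bordered_mat_invertible:
  fixes K :: "'a :: field mat"
  assumes K: "K \<in> carrier_mat k k" "invertible_mat K" and c: "c \<in> carrier_vec k"
    and z: "z \<in> carrier_vec k" and Kz: "K *\<^sub>v z = - (t \<cdot>\<^sub>v c)" and schur: "a * t + c \<bullet> z \<noteq> 0"
  shows "invertible_mat (bordered_mat a c K)"
  unfolding invertible_mat_iff_trivial_kernel[OF bordered_mat_carrier[OF K(1) c]]
proof (intro ballI impI)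
  fix v assume v: "v \<in> carrier_vec (1 + k)" and ker: "bordered_mat a c K *\<^sub>v v = 0\<^sub>v (1 + k)"
  define s where "s = v $ 0"
  define u where "u = vec_last v k"
  have u: "u \<in> carrier_vec k" unfolding u_def by simp
  have "vec_first v 1 = vec 1 (\<lambda>_. s)" unfolding s_def vec_first_def by (intro eq_vecI) auto
  then have v_split: "v = vec 1 (\<lambda>_. s) @\<^sub>v u" using vec_first_last_append[OF v] unfolding u_def by simp
  have prod: "vec 1 (\<lambda>_. a * s + c \<bullet> u) @\<^sub>v (s \<cdot>\<^sub>v c + K *\<^sub>v u) = 0\<^sub>v (1 + k)"
    using ker bordered_mat_mult_vec[OF K(1) c u] v_split by simp
  from arg_cong[OF prod, of "\<lambda>x. x $ 0"] have first: "a * s + c \<bullet> u = 0" by simp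
  have Ku: "K *\<^sub>v u = - (s \<cdot>\<^sub>v c)"
  proof (rule eq_vecI)
    fix i assume "i < dim_vec (- (s \<cdot>\<^sub>v c))"
    then have "i < k" using c by simp
    with arg_cong[OF prod, of "\<lambda>x. x $ (1 + i)"] show "(K *\<^sub>v u) $ i = (- (s \<cdot>\<^sub>v c)) $ i"
      using K(1) c u by (simp add: add_eq_0_iff)
  qed (use K(1) c in simp)
  have "K *\<^sub>v (t \<cdot>\<^sub>v u) = t \<cdot>\<^sub>v (- (s \<cdot>\<^sub>v c))" by (simp add: mult_mat_vec[OF K(1) u] Ku)
  also have "\<dots> = s \<cdot>\<^sub>v (- (t \<cdot>\<^sub>v c))" by (intro eq_vecI) auto
  also have "\<dots> = K *\<^sub>v (s \<cdot>\<^sub>v z)" by (simp add: mult_mat_vec[OF K(1) z] Kz)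
  finally have tu: "t \<cdot>\<^sub>v u = s \<cdot>\<^sub>v z" by (rule invertible_mat_mult_vec_cancel[OF _ K]) (use u z in auto)
  have "s * (a * t + c \<bullet> z) = t * (a * s) + c \<bullet> (s \<cdot>\<^sub>v z)"
    by (simp add: scalar_prod_smult_distrib[OF c z] algebra_simps)
  also have "c \<bullet> (s \<cdot>\<^sub>v z) = t * (c \<bullet> u)"
    by (simp add: tu[symmetric] scalar_prod_smult_distrib[OF c u])
  finally have "s * (a * t + c \<bullet> z) = t * (a * s + c \<bullet> u)" by (simp add: distrib_left)
  then have "s = 0" using first schur by simp
  then have "K *\<^sub>v u = 0\<^sub>v k" using Ku c by (intro eq_vecI) auto
  then have "u = 0\<^sub>v k" using K u invertible_mat_iff_trivial_kernel by blast
  then show "v = 0\<^sub>v (1 + k)" using v_split \<open>s = 0\<close> by (intro eq_vecI) auto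
qed

lemma bordered_mat_singular:
  fixes K :: "'a :: field mat"
  assumes K: "K \<in> carrier_mat k k" and c: "c \<in> carrier_vec k"
    and z: "z \<in> carrier_vec k" and Kz: "K *\<^sub>v z = - (t \<cdot>\<^sub>v c)" and schur: "a * t + c \<bullet> z = 0"
    and t: "t \<noteq> 0"
  shows "eigenvector (bordered_mat a c K) (vec 1 (\<lambda>_. t) @\<^sub>v z) 0"
    and "\<not> invertible_mat (bordered_mat a c K)"
proof -
  let ?v = "vec 1 (\<lambda>_. t) @\<^sub>v z"
  have v: "?v \<in> carrier_vec (1 + k)" using z by (intro append_carrier_vec) auto
  have nz: "?v \<noteq> 0\<^sub>v (1 + k)"
  proof
    assume "?v = 0\<^sub>v (1 + k)"
    then have "?v $ 0 = 0" by simp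
    then show False using t by simp
  qed
  have ker: "bordered_mat a c K *\<^sub>v ?v = 0\<^sub>v (1 + k)"
    unfolding bordered_mat_mult_vec[OF K c z] using K c schur Kz by (intro eq_vecI) auto
  have "0 \<cdot>\<^sub>v ?v = 0\<^sub>v (1 + k)" using v z by (intro eq_vecI) auto
  moreover have "dim_row (bordered_mat a c K) = 1 + k" using bordered_mat_carrier[OF K c] by auto
  ultimately show "eigenvector (bordered_mat a c K) ?v 0"
    unfolding eigenvector_def using v nz ker by simp
  show "\<not> invertible_mat (bordered_mat a c K)"
    unfolding invertible_mat_iff_trivial_kernel[OF bordered_mat_carrier[OF K c]] using v nz ker by blast
qed

text \<open>Eliminating the border with the unit lower triangular matrix built from \<open>w = K\<^sup>-\<^sup>1 (-c)\<close>
  leaves a block upper triangular matrix with a zero corner.\<close>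

lemma bordered_mat_similar_block_triangular:
  fixes K :: "'a :: comm_ring_1 mat"
  assumes K: "K \<in> carrier_mat k k" and c: "c \<in> carrier_vec k" and w: "w \<in> carrier_vec k"
    and Kw: "K *\<^sub>v w = - c" and aw: "a + c \<bullet> w = 0"
  shows "similar_mat (bordered_mat a c K)
    (four_block_mat (0\<^sub>m 1 1) (mat_of_rows k [c]) (0\<^sub>m k 1) (K - mat_of_cols k [w] * mat_of_rows k [c]))"
proof -
  define W where "W = mat_of_cols k [w]"
  define R where "R = mat_of_rows k [c]"
  define P where "P = four_block_mat (1\<^sub>m 1) (0\<^sub>m 1 k) W (1\<^sub>m k)"
  define Q where "Q = four_block_mat (1\<^sub>m 1) (0\<^sub>m 1 k) (- W) (1\<^sub>m k)"
  define T where "T = four_block_mat (0\<^sub>m 1 1) R (0\<^sub>m k 1) (K - W * R)"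
  have W: "W \<in> carrier_mat k 1" and R: "R \<in> carrier_mat 1 k" unfolding W_def R_def by auto
  have WR: "W * R \<in> carrier_mat k k" and KWR: "K - W * R \<in> carrier_mat k k" using W R K by auto
  have colW: "col W 0 = w" and rowR: "row R 0 = c"
    unfolding W_def R_def using w c by (auto simp: mat_of_cols_def mat_of_rows_def)
  have RW: "- (R * W) = mat 1 1 (\<lambda>_. a)"
    using R W aw colW rowR by (intro eq_matI) (auto simp: add_eq_0_iff2)
  have KW: "- (K * W) = mat_of_cols k [c]"
  proof (rule eq_matI)
    fix i j assume "i < dim_row (mat_of_cols k [c])" "j < dim_col (mat_of_cols k [c])"
    then have ij: "i < k" "j = 0" by auto
    have "(K * W) $$ (i, 0) = (K *\<^sub>v w) $ i" using ij K W colW by simp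
    then show "(- (K * W)) $$ (i, j) = mat_of_cols k [c] $$ (i, j)"
      using ij W K Kw c by (simp add: mat_of_cols_def)
  qed (use K W in auto)
  have PQ: "P * Q = 1\<^sub>m (1 + k)"
    unfolding P_def Q_def using W by (subst mult_four_block_mat[of _ 1 1 _ k _ k]) (auto intro!: eq_matI)
  have QP: "Q * P = 1\<^sub>m (1 + k)"
    unfolding P_def Q_def using W by (subst mult_four_block_mat[of _ 1 1 _ k _ k]) (auto intro!: eq_matI)
  have "1\<^sub>m 1 * 0\<^sub>m 1 1 + 0\<^sub>m 1 k * 0\<^sub>m k 1 = 0\<^sub>m 1 1"
    and "1\<^sub>m 1 * R + 0\<^sub>m 1 k * (K - W * R) = R"
    and "W * 0\<^sub>m 1 1 + 1\<^sub>m k * 0\<^sub>m k 1 = 0\<^sub>m k 1"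
    and "W * R + 1\<^sub>m k * (K - W * R) = K"
    using W R WR KWR K by (auto intro!: eq_matI)
  then have PT: "P * T = four_block_mat (0\<^sub>m 1 1) R (0\<^sub>m k 1) K"
    unfolding P_def T_def using W R KWR
    by (subst mult_four_block_mat[of _ 1 1 _ k _ k _ _ 1 _ k]) simp_all
  have c1: "0\<^sub>m 1 1 * 1\<^sub>m 1 + R * - W = mat 1 1 (\<lambda>_. a)"
    unfolding RW[symmetric] by (rule eq_matI) (use R W in auto)
  have c2: "0\<^sub>m 1 1 * 0\<^sub>m 1 k + R * 1\<^sub>m k = R" by (rule eq_matI) (use R in auto)
  have c3: "0\<^sub>m k 1 * 1\<^sub>m 1 + K * - W = mat_of_cols k [c]"
    unfolding KW[symmetric] by (rule eq_matI) (use K W in auto)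
  have c4: "0\<^sub>m k 1 * 0\<^sub>m 1 k + K * 1\<^sub>m k = K" by (rule eq_matI) (use K in auto)
  have PTQ: "P * T * Q = bordered_mat a c K"
    unfolding PT Q_def bordered_mat_def carrier_vecD[OF c] R_def[symmetric]
      mult_four_block_mat[OF zero_carrier_mat R zero_carrier_mat K
        one_carrier_mat zero_carrier_mat uminus_carrier_mat[OF W] one_carrier_mat]
      c1 c2 c3 c4 ..
  have "P \<in> carrier_mat (1 + k) (1 + k)" "Q \<in> carrier_mat (1 + k) (1 + k)"
    unfolding P_def Q_def by (rule four_block_carrier_mat[OF one_carrier_mat one_carrier_mat])+
  moreover have "T \<in> carrier_mat (1 + k) (1 + k)"
    unfolding T_def by (rule four_block_carrier_mat[OF zero_carrier_mat KWR])
  ultimately have "{bordered_mat a c K, T, P, Q} \<subseteq> carrier_mat (1 + k) (1 + k)"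
    using bordered_mat_carrier[OF K c] by auto
  from similar_matI[OF this PQ QP PTQ[symmetric]] show ?thesis unfolding T_def W_def R_def .
qed

lemma invertible_sym_mat_minus_rank_one:
  fixes K :: "real mat"
  assumes K: "K \<in> carrier_mat k k" "K\<^sup>T = K" "invertible_mat K" and c: "c \<in> carrier_vec k"
    and w: "w \<in> carrier_vec k" and Kw: "K *\<^sub>v w = - c"
  shows "invertible_mat (K - mat_of_cols k [w] * mat_of_rows k [c])"
proof -
  let ?W = "mat_of_cols k [w]" and ?R = "mat_of_rows k [c]"
  have WR: "?W * ?R \<in> carrier_mat k k" by auto
  show ?thesis
    unfolding invertible_mat_iff_trivial_kernel[OF minus_carrier_mat[OF WR, of K]]
  proof (intro ballI impI)
    fix u assume u: "u \<in> carrier_vec k" and ker: "(K - ?W * ?R) *\<^sub>v u = 0\<^sub>v k"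
    define s where "s = c \<bullet> u"
    have WRu: "(?W * ?R) *\<^sub>v u = s \<cdot>\<^sub>v w"
      using c u w unfolding s_def
      by (intro eq_vecI) (auto simp: mat_of_cols_def mat_of_rows_def scalar_prod_def row_def col_def
          sum_distrib_left mult.commute mult.left_commute)
    have diff: "K *\<^sub>v u - s \<cdot>\<^sub>v w = 0\<^sub>v k"
      using ker WRu minus_mult_distrib_mat_vec[OF K(1) WR u] by simp
    have Ku: "K *\<^sub>v u = s \<cdot>\<^sub>v w"
    proof (rule eq_vecI)
      fix i assume "i < dim_vec (s \<cdot>\<^sub>v w)"
      with arg_cong[OF diff, of "\<lambda>x. x $ i"] show "(K *\<^sub>v u) $ i = (s \<cdot>\<^sub>v w) $ i"
        using K(1) u w by simp
    qed (use K(1) w in simp)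
    have "w \<bullet> (K *\<^sub>v u) = (K *\<^sub>v w) \<bullet> u" using transpose_vec_mult_scalar[OF K(1) u w] K(2) by simp
    then have "- s = s * (w \<bullet> w)" using Ku Kw c u w unfolding s_def by simp
    moreover have "w \<bullet> w \<ge> 0"
      using conjugate_square_ge_0_vec[of w] by (simp add: conjugate_vec_def conjugate_real_def)
    ultimately have "s * (1 + w \<bullet> w) = 0" and "1 + w \<bullet> w \<noteq> 0" by (simp_all add: distrib_left)
    then have "s = 0" by simp
    then have "K *\<^sub>v u = 0\<^sub>v k" using Ku w by (intro eq_vecI) auto
    then show "u = 0\<^sub>v k" using K u invertible_mat_iff_trivial_kernel by blast
  qed
qed

lemma order_zero_char_poly_bordered_mat:
  fixes K :: "real mat"
  assumes K: "K \<in> carrier_mat k k" "K\<^sup>T = K" "invertible_mat K" and c: "c \<in> carrier_vec k"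
    and z: "z \<in> carrier_vec k" and Kz: "K *\<^sub>v z = - (t \<cdot>\<^sub>v c)" and schur: "a * t + c \<bullet> z = 0"
    and t: "t \<noteq> 0"
  shows "order 0 (char_poly (bordered_mat a c K)) = 1"
proof -
  define w where "w = (1 / t) \<cdot>\<^sub>v z"
  have w: "w \<in> carrier_vec k" using z unfolding w_def by simp
  have Kw: "K *\<^sub>v w = - c"
    unfolding w_def mult_mat_vec[OF K(1) z] Kz using c t by (intro eq_vecI) auto
  have aw: "a + c \<bullet> w = 0"
    unfolding w_def scalar_prod_smult_distrib[OF c z] using schur t by (simp add: field_simps)
  define K' where "K' = K - mat_of_cols k [w] * mat_of_rows k [c]"
  have K': "K' \<in> carrier_mat k k" unfolding K'_def using K(1) by auto
  have "char_poly (bordered_mat a c K) = char_poly (0\<^sub>m 1 1 :: real mat) * char_poly K'"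
    unfolding char_poly_similar[OF bordered_mat_similar_block_triangular[OF K(1) c w Kw aw]] K'_def[symmetric]
    using K' by (intro char_poly_four_block_zeros_col) auto
  also have "char_poly (0\<^sub>m 1 1 :: real mat) = [:0, 1:]"
    unfolding char_poly_defs by (subst det_single) auto
  finally have cp: "char_poly (bordered_mat a c K) = [:0, 1:] * char_poly K'" .
  have "poly (char_poly K') 0 \<noteq> 0"
  proof
    assume "poly (char_poly K') 0 = 0"
    then obtain v where "eigenvector K' v 0" using eigenvalue_root_char_poly[OF K'] eigenvalue_def by blast
    then have "v \<in> carrier_vec k" "v \<noteq> 0\<^sub>v k" "K' *\<^sub>v v = 0\<^sub>v k"
      unfolding eigenvector_def using K' by auto
    moreover have "invertible_mat K'"
      unfolding K'_def by (rule invertible_sym_mat_minus_rank_one[OF K c w Kw])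
    ultimately show False using invertible_mat_iff_trivial_kernel[OF K'] by blast
  qed
  then have "order 0 (char_poly K') = 0" and "char_poly K' \<noteq> 0"
    using order_root by (blast, auto)
  moreover have "order 0 [:0, 1 :: real:] = 1" using order_power_n_n[of 0 1] by simp
  ultimately show ?thesis unfolding cp using order_mult[of "[:0, 1 :: real:]" "char_poly K'" 0] by simp
qed

section \<open>The reduced system\<close>

locale kkt_partition =
  fixes H M A :: "real mat" and n m l :: nat and B N :: "nat set"
  assumes H_carrier: "H \<in> carrier_mat n n" and H_sym: "H\<^sup>T = H"
    and M_carrier: "M \<in> carrier_mat m m" and M_sym: "M\<^sup>T = M"
    and A_carrier: "A \<in> carrier_mat m n"
    and l_lt: "l < n" and l_notin_B: "l \<notin> B" and l_notin_N: "l \<notin> N"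
    and partition: "B \<union> {l} \<union> N = {0..<n}"
begin

lemma B_lt [simp]: "{i. i < n \<and> i \<in> B} = B" and N_lt [simp]: "{i. i < n \<and> i \<in> N} = N"
  using partition by auto

lemma in_B_lt: "i \<in> B \<Longrightarrow> i < n" and in_N_lt: "i \<in> N \<Longrightarrow> i < n"
  using partition by auto

lemma index_cases:
  assumes "i < n" and "i \<in> B \<Longrightarrow> P" and "i = l \<Longrightarrow> P" and "i \<in> N \<Longrightarrow> P"
  shows P
proof -
  have "i \<in> B \<union> {l} \<union> N" using partition assms(1) by simp
  then show P using assms(2-4) by blast
qed

lemma H_BB_carrier: "submatrix H B B \<in> carrier_mat (card B) (card B)"
  using H_carrier by (intro carrier_matI) (simp_all add: dim_submatrix)

lemma A_B_carrier: "cols_sub A B \<in> carrier_mat m (card B)"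
  using A_carrier unfolding cols_sub_def by (intro carrier_matI) (simp_all add: dim_submatrix)

lemma KB_carrier: "KB H A M B \<in> carrier_mat (card B + m) (card B + m)"
  unfolding KB_def by (rule four_block_carrier_mat[OF H_BB_carrier uminus_carrier_mat[OF M_carrier]])

lemma KB_col_carrier: "KB_col H A B l \<in> carrier_vec (card B + m)"
  unfolding KB_col_def using H_carrier A_carrier l_lt by (intro append_carrier_vec carrier_vecI) auto

lemma KB_sym: "(KB H A M B)\<^sup>T = KB H A M B"
proof -
  have "(submatrix H B B)\<^sup>T = submatrix H B B" by (simp add: transpose_submatrix H_sym)
  moreover have "(- M)\<^sup>T = - M" by (simp add: transpose_uminus M_sym)
  ultimately show ?thesis
    unfolding KB_def transpose_four_block_mat[OF H_BB_carrier transpose_carrier_mat[THEN iffD2, OF A_B_carrier]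
        A_B_carrier uminus_carrier_mat[OF M_carrier]]
    by simp
qed

lemma Kl_eq_bordered_mat: "Kl H A M B l = bordered_mat (H $$ (l, l)) (KB_col H A B l) (KB H A M B)"
  unfolding Kl_def bordered_mat_def Let_def ..

lemma sys_zero: "sys H A M B N (0\<^sub>v n) (0\<^sub>v m) (0\<^sub>v n)"
  unfolding sys_def using H_carrier M_carrier A_carrier in_B_lt in_N_lt by auto

context
  fixes dx dy dz assumes sol: "sys H A M B N dx dy dz"
begin

lemma sol_carrier: "dx \<in> carrier_vec n" "dy \<in> carrier_vec m" "dz \<in> carrier_vec n"
  using sol H_carrier M_carrier unfolding sys_def by auto

lemma dz_eq: "dz = H *\<^sub>v dx - A\<^sup>T *\<^sub>v dy"
proof -
  have "H *\<^sub>v dx - A\<^sup>T *\<^sub>v dy - dz = 0\<^sub>v n" using sol H_carrier unfolding sys_def by auto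
  then show ?thesis using sol_carrier H_carrier A_carrier by (subst (asm) minus_vec_eq_0_iff) auto
qed

lemma dx_N: "i \<in> N \<Longrightarrow> dx $ i = 0" and dz_B: "i \<in> B \<Longrightarrow> dz $ i = 0"
  using sol unfolding sys_def by auto

lemma primal_eq: "A *\<^sub>v dx = - (M *\<^sub>v dy)"
proof -
  have "A *\<^sub>v dx + M *\<^sub>v dy = 0\<^sub>v m" using sol M_carrier unfolding sys_def by auto
  then show ?thesis using sol_carrier M_carrier A_carrier by (subst (asm) add_vec_eq_0_iff) auto
qed

lemma dx_split: "dx = restrict_vec dx B + dx $ l \<cdot>\<^sub>v unit_vec n l"
proof (rule eq_vecI)
  fix i assume "i < dim_vec (restrict_vec dx B + dx $ l \<cdot>\<^sub>v unit_vec n l)"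
  then have i: "i < n" by simp
  then show "dx $ i = (restrict_vec dx B + dx $ l \<cdot>\<^sub>v unit_vec n l) $ i"
    by (rule index_cases) (use i l_lt sol_carrier l_notin_B l_notin_N dx_N in auto)
qed (use sol_carrier in simp)

lemma mult_dx_split:
  assumes X: "X \<in> carrier_mat r n"
  shows "X *\<^sub>v dx = X *\<^sub>v restrict_vec dx B + dx $ l \<cdot>\<^sub>v col X l"
proof -
  have x: "restrict_vec dx B \<in> carrier_vec n" using sol_carrier by (auto intro: carrier_vecI)
  have "X *\<^sub>v dx = X *\<^sub>v (restrict_vec dx B + dx $ l \<cdot>\<^sub>v unit_vec n l)"
    by (simp only: dx_split[symmetric])
  also have "\<dots> = X *\<^sub>v restrict_vec dx B + dx $ l \<cdot>\<^sub>v (X *\<^sub>v unit_vec n l)"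
    using X x by (simp add: mult_add_distrib_mat_vec mult_mat_vec)
  finally show ?thesis using mult_unit_vec[OF X l_lt] by simp
qed

lemma dz_split_index:
  "i < n \<Longrightarrow> dz $ i = (H *\<^sub>v restrict_vec dx B) $ i + dx $ l * H $$ (i, l) - col A i \<bullet> dy"
  using arg_cong[OF dz_eq, of "\<lambda>v. v $ i"] mult_dx_split[OF H_carrier] H_carrier A_carrier sol_carrier l_lt
  by simp

lemma primal_split_index:
  "r < m \<Longrightarrow> (A *\<^sub>v restrict_vec dx B) $ r + dx $ l * A $$ (r, l) = - (row M r \<bullet> dy)"
  using arg_cong[OF primal_eq, of "\<lambda>v. v $ r"] mult_dx_split[OF A_carrier] A_carrier M_carrier sol_carrier l_lt
  by simp

lemma KB_mult: "KB H A M B *\<^sub>v (subvec dx B @\<^sub>v - dy) = - (dx $ l \<cdot>\<^sub>v KB_col H A B l)"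
proof -
  let ?x = "restrict_vec dx B"
  have x_out: "\<And>j. j < dim_vec ?x \<Longrightarrow> j \<notin> B \<Longrightarrow> ?x $ j = 0" by simp
  have HB: "submatrix H B B *\<^sub>v subvec dx B = subvec (H *\<^sub>v ?x) B"
    using submatrix_mult_subvec[of H ?x B B] x_out sol_carrier H_carrier by simp
  have AB: "cols_sub A B *\<^sub>v subvec dx B = A *\<^sub>v ?x"
    using submatrix_mult_subvec[of A ?x B UNIV] x_out sol_carrier A_carrier by (simp add: cols_sub_def)
  have ATB: "(cols_sub A B)\<^sup>T *\<^sub>v - dy = subvec (A\<^sup>T *\<^sub>v - dy) B"
    using submatrix_mult_subvec[of "A\<^sup>T" "- dy" UNIV B] sol_carrier A_carrier
    by (simp add: cols_sub_def transpose_submatrix)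
  have "KB H A M B *\<^sub>v (subvec dx B @\<^sub>v - dy)
      = (subvec (H *\<^sub>v ?x) B + subvec (A\<^sup>T *\<^sub>v - dy) B) @\<^sub>v (A *\<^sub>v ?x + - M *\<^sub>v - dy)"
    unfolding KB_def HB[symmetric] AB[symmetric] ATB[symmetric]
    using H_BB_carrier A_B_carrier M_carrier sol_carrier
    by (intro four_block_mat_mult_vec) (auto intro: carrier_vecI)
  also have "\<dots> = - (dx $ l \<cdot>\<^sub>v KB_col H A B l)"
  proof (rule eq_vecI)
    fix i assume "i < dim_vec (- (dx $ l \<cdot>\<^sub>v KB_col H A B l))"
    then have i: "i < card B + m" using KB_col_carrier by simp
    show "((subvec (H *\<^sub>v ?x) B + subvec (A\<^sup>T *\<^sub>v - dy) B) @\<^sub>v (A *\<^sub>v ?x + - M *\<^sub>v - dy)) $ i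
        = (- (dx $ l \<cdot>\<^sub>v KB_col H A B l)) $ i"
    proof (cases "i < card B")
      case True
      then have "pick B i \<in> B" "pick B i < n" using pick_in_set_lt[of i n B] by auto
      with dz_split_index[of "pick B i"] dz_B show ?thesis
        using True i H_carrier A_carrier sol_carrier l_lt by (simp add: KB_col_def)
    next
      case False
      then have "i - card B < m" using i by simp
      with primal_split_index[of "i - card B"] show ?thesis
        using False i H_carrier A_carrier M_carrier sol_carrier l_lt by (simp add: KB_col_def)
    qed
  qed (use KB_col_carrier H_carrier A_carrier M_carrier in simp)
  finally show ?thesis .
qed

lemma dz_l: "dz $ l = H $$ (l, l) * dx $ l + subvec (col H l) B \<bullet> subvec dx B - col A l \<bullet> dy"
proof -
  have "(H *\<^sub>v restrict_vec dx B) $ l = col H l \<bullet> restrict_vec dx B"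
    using H_carrier l_lt arg_cong[OF H_sym, of "\<lambda>X. row X l"] by simp
  also have "\<dots> = subvec (col H l) B \<bullet> subvec dx B"
    using scalar_prod_subvec[of "col H l" "restrict_vec dx B" B] H_carrier sol_carrier by simp
  finally show ?thesis using dz_split_index[OF l_lt] by simp
qed

lemma dz_l_eq_schur: "dz $ l = H $$ (l, l) * dx $ l + KB_col H A B l \<bullet> (subvec dx B @\<^sub>v - dy)"
proof -
  have "KB_col H A B l \<bullet> (subvec dx B @\<^sub>v - dy) = subvec (col H l) B \<bullet> subvec dx B + col A l \<bullet> - dy"
    unfolding KB_col_def using H_carrier A_carrier sol_carrier l_lt
    by (intro scalar_prod_append) (auto intro: carrier_vecI)
  also have "col A l \<bullet> - dy = - (col A l \<bullet> dy)"
    using A_carrier sol_carrier l_lt by (intro scalar_prod_uminus_right) auto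
  finally show ?thesis using dz_l by simp
qed

lemma dz_N: "subvec dz N = dx $ l \<cdot>\<^sub>v subvec (col H l) N + (submatrix H B N)\<^sup>T *\<^sub>v subvec dx B
    - (cols_sub A N)\<^sup>T *\<^sub>v dy"
proof -
  let ?x = "restrict_vec dx B"
  have HN: "(submatrix H B N)\<^sup>T *\<^sub>v subvec dx B = subvec (H *\<^sub>v ?x) N"
    using submatrix_mult_subvec[of H ?x B N] sol_carrier H_carrier by (simp add: transpose_submatrix H_sym)
  have AN: "(cols_sub A N)\<^sup>T *\<^sub>v dy = subvec (A\<^sup>T *\<^sub>v dy) N"
    using submatrix_mult_subvec[of "A\<^sup>T" dy UNIV N] sol_carrier A_carrier
    by (simp add: cols_sub_def transpose_submatrix)
  show ?thesis unfolding HN AN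
  proof (rule eq_vecI)
    fix p assume "p < dim_vec (dx $ l \<cdot>\<^sub>v subvec (col H l) N + subvec (H *\<^sub>v ?x) N - subvec (A\<^sup>T *\<^sub>v dy) N)"
    then have p: "p < card N" using H_carrier A_carrier by simp
    then have "pick N p < n" using pick_in_set_lt[of p n N] by auto
    with dz_split_index[of "pick N p"] show "subvec dz N $ p = (dx $ l \<cdot>\<^sub>v subvec (col H l) N
        + subvec (H *\<^sub>v ?x) N - subvec (A\<^sup>T *\<^sub>v dy) N) $ p"
      using p H_carrier A_carrier sol_carrier l_lt by simp
  qed (use H_carrier A_carrier sol_carrier in simp)
qed

lemma energy_identity: "dx $ l * dz $ l = dx \<bullet> (H *\<^sub>v dx) + dy \<bullet> (M *\<^sub>v dy)"
proof -
  have Hdx: "H *\<^sub>v dx \<in> carrier_vec n" and ATdy: "A\<^sup>T *\<^sub>v dy \<in> carrier_vec n"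
    and Mdy: "M *\<^sub>v dy \<in> carrier_vec m" using H_carrier A_carrier M_carrier sol_carrier by auto
  have "dx $ l * dz $ l = dx \<bullet> dz"
  proof (rule scalar_prod_single_support[symmetric, OF sol_carrier(1,3) l_lt])
    fix i assume "i < n" "i \<noteq> l"
    show "dx $ i * dz $ i = 0" by (rule index_cases[OF \<open>i < n\<close>]) (use \<open>i \<noteq> l\<close> in \<open>auto simp: dx_N dz_B\<close>)
  qed
  also have "\<dots> = dx \<bullet> (H *\<^sub>v dx) - dx \<bullet> (A\<^sup>T *\<^sub>v dy)"
    unfolding dz_eq by (rule scalar_prod_minus_distrib[OF sol_carrier(1) Hdx ATdy])
  also have "dx \<bullet> (A\<^sup>T *\<^sub>v dy) = dy \<bullet> (A *\<^sub>v dx)"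
    using transpose_vec_mult_scalar[OF A_carrier sol_carrier(1,2)] comm_scalar_prod[OF ATdy sol_carrier(1)]
    by simp
  also have "\<dots> = - (dy \<bullet> (M *\<^sub>v dy))"
    unfolding primal_eq using sol_carrier Mdy M_carrier by (intro scalar_prod_uminus_right) auto
  finally show ?thesis by simp
qed

end

lemma sys_unique:
  assumes KB: "invertible_mat (KB H A M B)"
    and sol: "sys H A M B N dx dy dz" and sol': "sys H A M B N dx' dy' dz'" and l: "dx $ l = dx' $ l"
  shows "dx = dx' \<and> dy = dy' \<and> dz = dz'"
proof -
  note carr = sol_carrier[OF sol] sol_carrier[OF sol']
  have "KB H A M B *\<^sub>v (subvec dx B @\<^sub>v - dy) = KB H A M B *\<^sub>v (subvec dx' B @\<^sub>v - dy')"
    using KB_mult[OF sol] KB_mult[OF sol'] l by simp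
  then have "subvec dx B @\<^sub>v - dy = subvec dx' B @\<^sub>v - dy'"
    by (rule invertible_mat_mult_vec_cancel[OF _ KB_carrier KB]) (use carr in \<open>auto intro: carrier_vecI\<close>)
  moreover have "subvec dx B \<in> carrier_vec (card B)" "subvec dx' B \<in> carrier_vec (card B)"
    using carr by (auto intro: carrier_vecI)
  ultimately have sub: "subvec dx B = subvec dx' B" and "- dy = - dy'" using append_vec_eq by blast+
  then have dy: "dy = dy'" using carr by (metis uminus_uminus_vec)
  have dx: "dx = dx'"
  proof (rule eq_if_subvec_eq[OF _ sub])
    fix i assume i: "i < dim_vec dx'" "i \<notin> B"
    then have "i < n" using carr by simp
    then show "dx $ i = dx' $ i"
      by (rule index_cases) (use i l in \<open>auto simp: dx_N[OF sol] dx_N[OF sol']\<close>)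
  qed (use carr in simp)
  show ?thesis using dz_eq[OF sol] dz_eq[OF sol'] dx dy by simp
qed

lemma sys_dx_l_eq_0:
  assumes "invertible_mat (KB H A M B)" and "sys H A M B N dx dy dz" and "dx $ l = 0"
  shows "dx = 0\<^sub>v n \<and> dy = 0\<^sub>v m \<and> dz = 0\<^sub>v n"
  using sys_unique[OF assms(1,2) sys_zero] assms(3) l_lt by simp

lemma sys_dz_l_eq_0:
  assumes psd: "psd H" "psd M" and KB: "invertible_mat (KB H A M B)"
    and sol: "sys H A M B N dx dy dz" and dzl: "dz $ l = 0"
  shows "dy = 0\<^sub>v m \<and> dz = 0\<^sub>v n"
proof -
  note carr = sol_carrier[OF sol]
  have "dx \<bullet> (H *\<^sub>v dx) \<ge> 0" and "dy \<bullet> (M *\<^sub>v dy) \<ge> 0"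
    using psd carr H_carrier M_carrier unfolding psd_def by auto
  moreover have "dx \<bullet> (H *\<^sub>v dx) + dy \<bullet> (M *\<^sub>v dy) = 0" using energy_identity[OF sol] dzl by simp
  ultimately have "dx \<bullet> (H *\<^sub>v dx) = 0" and "dy \<bullet> (M *\<^sub>v dy) = 0" by linarith+
  then have Hdx: "H *\<^sub>v dx = 0\<^sub>v n" and Mdy: "M *\<^sub>v dy = 0\<^sub>v m"
    using psd_quadratic_form_eq_0[OF H_carrier H_sym psd(1) carr(1)]
      psd_quadratic_form_eq_0[OF M_carrier M_sym psd(2) carr(2)] by auto
  have "A *\<^sub>v dx = 0\<^sub>v m" using primal_eq[OF sol] Mdy by auto
  then have "sys H A M B N dx (0\<^sub>v m) (0\<^sub>v n)"
    using sol Hdx H_carrier A_carrier M_carrier in_B_lt unfolding sys_def by (auto intro!: eq_vecI)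
  from sys_unique[OF KB sol this refl] show ?thesis by simp
qed

lemma Kl_dichotomy:
  assumes psd: "psd H" "psd M" and KB: "invertible_mat (KB H A M B)"
    and sol: "sys H A M B N dx dy dz" and t: "dx $ l > 0"
  shows "(invertible_mat (Kl H A M B l) \<and> dz $ l > 0)
    \<or> (\<not> invertible_mat (Kl H A M B l) \<and> dz $ l = 0 \<and> dy = 0\<^sub>v m \<and> subvec dz N = 0\<^sub>v (card N)
       \<and> order 0 (char_poly (Kl H A M B l)) = 1
       \<and> eigenvector (Kl H A M B l) (vec 1 (\<lambda>_. dx $ l) @\<^sub>v subvec dx B @\<^sub>v 0\<^sub>v m) 0)"
proof -
  let ?z = "subvec dx B @\<^sub>v - dy"
  note carr = sol_carrier[OF sol]
  have z: "?z \<in> carrier_vec (card B + m)" using carr by (auto intro: carrier_vecI)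
  note Kz = KB_mult[OF sol] and schur = dz_l_eq_schur[OF sol]
  have "dx $ l * dz $ l \<ge> 0"
    using energy_identity[OF sol] psd carr H_carrier M_carrier unfolding psd_def by auto
  then have "dz $ l \<ge> 0" using t by (simp add: zero_le_mult_iff)
  then consider "dz $ l > 0" | "dz $ l = 0" by linarith
  then show ?thesis
  proof cases
    case 1
    then show ?thesis unfolding Kl_eq_bordered_mat
      using bordered_mat_invertible[OF KB_carrier KB KB_col_carrier z Kz] schur by auto
  next
    case 2
    then have dy: "dy = 0\<^sub>v m" and dz: "dz = 0\<^sub>v n" using sys_dz_l_eq_0[OF psd KB sol] by auto
    have tz: "dx $ l \<noteq> 0" using t by simp
    have schur0: "H $$ (l, l) * dx $ l + KB_col H A B l \<bullet> ?z = 0" using schur 2 by simp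
    have "- dy = 0\<^sub>v m" using dy by auto
    then show ?thesis
      unfolding Kl_eq_bordered_mat using 2 dy dz
        bordered_mat_singular[OF KB_carrier KB_col_carrier z Kz schur0 tz]
        order_zero_char_poly_bordered_mat[OF KB_carrier KB_sym KB KB_col_carrier z Kz schur0 tz]
      by simp
  qed
qed

end

theorem proposition3:
  fixes H M A :: "real mat" and n m l :: nat and B N :: "nat set"
  assumes H: "H \<in> carrier_mat n n" "H\<^sup>T = H" "psd H"
    and M: "M \<in> carrier_mat m m" "M\<^sup>T = M" "psd M"
    and A: "A \<in> carrier_mat m n"
    and idx: "l < n" "l \<notin> B" "l \<notin> N" "B \<inter> N = {}" "B \<union> {l} \<union> N = {0..<n}"
    and KBns: "invertible_mat (KB H A M B)"
  shows
    "(\<forall>dx dy dz. sys H A M B N dx dy dz \<and> dx $ l = 0 \<longrightarrow>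
        subvec dx B = 0\<^sub>v (card B) \<and> dy = 0\<^sub>v m \<and> dz $ l = 0 \<and> subvec dz N = 0\<^sub>v (card N))
   \<and> (\<forall>t::real. t > 0 \<longrightarrow>
       (\<forall>dx dy dz dx' dy' dz'. sys H A M B N dx dy dz \<and> dx $ l = t \<and>
            sys H A M B N dx' dy' dz' \<and> dx' $ l = t \<longrightarrow>
          subvec dx B = subvec dx' B \<and> dy = dy' \<and> dz $ l = dz' $ l \<and> subvec dz N = subvec dz' N)
     \<and> (\<forall>dx dy dz. sys H A M B N dx dy dz \<and> dx $ l = t \<longrightarrow>
          KB H A M B *\<^sub>v (subvec dx B @\<^sub>v (- dy)) = - (t \<cdot>\<^sub>v KB_col H A B l)
        \<and> dz $ l = H $$ (l, l) * t + subvec (col H l) B \<bullet> subvec dx B - col A l \<bullet> dy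
        \<and> subvec dz N = t \<cdot>\<^sub>v subvec (col H l) N
                         + (submatrix H B N)\<^sup>T *\<^sub>v subvec dx B
                         - (cols_sub A N)\<^sup>T *\<^sub>v dy
        \<and> ((invertible_mat (Kl H A M B l) \<and> dz $ l > 0)
           \<or> (\<not> invertible_mat (Kl H A M B l) \<and> dz $ l = 0
              \<and> dy = 0\<^sub>v m \<and> subvec dz N = 0\<^sub>v (card N)
              \<and> order 0 (char_poly (Kl H A M B l)) = 1
              \<and> eigenvector (Kl H A M B l) (vec 1 (\<lambda>_. t) @\<^sub>v subvec dx B @\<^sub>v 0\<^sub>v m) 0))))"
proof -
  interpret kkt_partition H M A n m l B N
    using H M A idx(1-3,5) by unfold_locales auto
  have zero: "subvec dx B = 0\<^sub>v (card B) \<and> dy = 0\<^sub>v m \<and> dz $ l = 0 \<and> subvec dz N = 0\<^sub>v (card N)"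
    if "sys H A M B N dx dy dz" "dx $ l = 0" for dx dy dz
    using sys_dx_l_eq_0[OF KBns that] idx(1) by simp
  have unique: "subvec dx B = subvec dx' B \<and> dy = dy' \<and> dz $ l = dz' $ l \<and> subvec dz N = subvec dz' N"
    if "sys H A M B N dx dy dz" "dx $ l = t" "sys H A M B N dx' dy' dz'" "dx' $ l = t"
    for t dx dy dz dx' dy' dz'
    using sys_unique[OF KBns that(1,3)] that(2,4) by simp
  have solution: "KB H A M B *\<^sub>v (subvec dx B @\<^sub>v (- dy)) = - (t \<cdot>\<^sub>v KB_col H A B l)
      \<and> dz $ l = H $$ (l, l) * t + subvec (col H l) B \<bullet> subvec dx B - col A l \<bullet> dy
      \<and> subvec dz N = t \<cdot>\<^sub>v subvec (col H l) N + (submatrix H B N)\<^sup>T *\<^sub>v subvec dx B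
          - (cols_sub A N)\<^sup>T *\<^sub>v dy
      \<and> ((invertible_mat (Kl H A M B l) \<and> dz $ l > 0)
         \<or> (\<not> invertible_mat (Kl H A M B l) \<and> dz $ l = 0 \<and> dy = 0\<^sub>v m \<and> subvec dz N = 0\<^sub>v (card N)
            \<and> order 0 (char_poly (Kl H A M B l)) = 1
            \<and> eigenvector (Kl H A M B l) (vec 1 (\<lambda>_. t) @\<^sub>v subvec dx B @\<^sub>v 0\<^sub>v m) 0))"
    if "sys H A M B N dx dy dz" "dx $ l = t" "t > 0" for t dx dy dz
    using KB_mult[OF that(1)] dz_l[OF that(1)] dz_N[OF that(1)] Kl_dichotomy[OF H(3) M(3) KBns that(1)] that(2,3)
    by simp
  show ?thesis using zero unique solution by blast
qed

end
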